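(* Let $p$ be an odd prime, $N\ge 2$ an odd integer, $q$ a power of $p$ and $m$ a positive integer with $q^m=p^{2js}$, where $s\ge 2$, $N\mid(p^j+1)$, and $j$ is the smallest positive integer with $N\mid (p^j+1)$. Let $\omega$ be a primitive element of $\mathbb{F}_{q^m}$, $\psi$ the canonical additive character of $\mathbb{F}_{q^m}$ and $\eta$ the quadratic character of $\mathbb{F}_{q^m}$. Then for every integer $c$, $$2\,\psi\Big(\omega^c \bigcup_{t=1}^{N-1}C_{2t}^{(2N,q^m)}\Big)-\psi\Big(\omega^c \bigcup_{t=1}^{N-1}C_t^{(N,q^m)}\Big)=\begin{cases}0, & \text{if } c\equiv 0 \pmod N,\\ \pm G_{q^m}(\eta),&\text{otherwise,}\end{cases}$$ where $\pm G_{q^m}(\eta)$ means the value is either $G_{q^m}(\eta)$ or $-G_{q^m}(\eta)$.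
   Context: For $M\mid q^m-1$ and an integer $i$, $C_i^{(M,q^m)}=\omega^i\langle\omega^M\rangle\subseteq\mathbb{F}_{q^m}^\ast$. The canonical additive character is $\psi(x)=e^{2\pi i\,\mathrm{Tr}_{q^m/p}(x)/p}$, and for a subset $A$, $\psi(A)=\sum_{x\in A}\psi(x)$. The quadratic Gauss sum is $G_{q^m}(\eta)=\sum_{x\in\mathbb{F}_{q^m}^\ast}\eta(x)\psi(x)$. *)

theory Defs
  imports "HOL-Analysis.Analysis"
begin

text \<open>Finite field F_{q^m} is modelled as a finite field type 'a with CARD('a) = q^m.\<close>

definition ext_degree :: "nat \<Rightarrow> 'a::{field,finite} itself \<Rightarrow> nat" where
  "ext_degree p T = (THE n. CARD('a) = p ^ n)"

definition abs_trace :: "nat \<Rightarrow> 'a::{field,finite} \<Rightarrow> 'a" where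
  "abs_trace p x = (\<Sum>i<ext_degree p TYPE('a). x ^ (p ^ i))"

text \<open>The trace lies in the prime field {of_nat k | k < p}; we read it as an integer in [0,p).\<close>
definition trace_nat :: "nat \<Rightarrow> 'a::{field,finite} \<Rightarrow> nat" where
  "trace_nat p x = (THE k. k < p \<and> of_nat k = abs_trace p x)"

definition can_add_char :: "nat \<Rightarrow> 'a::{field,finite} \<Rightarrow> complex" where
  "can_add_char p x = cis (2 * pi * real (trace_nat p x) / real p)"

definition char_sum :: "nat \<Rightarrow> 'a::{field,finite} set \<Rightarrow> complex" where
  "char_sum p A = (\<Sum>x\<in>A. can_add_char p x)"

definition primitive_elem :: "'a::{field,finite} \<Rightarrow> bool" where
  "primitive_elem w \<longleftrightarrow> w \<noteq> 0 \<and> (\<forall>x. x \<noteq> 0 \<longrightarrow> (\<exists>k::nat. x = w ^ k))"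

definition cyclotomic_class :: "'a::{field,finite} \<Rightarrow> nat \<Rightarrow> int \<Rightarrow> 'a set" where
  "cyclotomic_class w M i = {w powi (i + int M * k) | k::int. True}"

definition quad_char :: "'a::{field,finite} \<Rightarrow> complex" where
  "quad_char x = (if x = 0 then 0 else if (\<exists>y. x = y ^ 2) then 1 else -1)"

definition quad_gauss_sum :: "nat \<Rightarrow> 'a::{field,finite} itself \<Rightarrow> complex" where
  "quad_gauss_sum p T = (\<Sum>x\<in>(UNIV::'a set) - {0}. quad_char x * can_add_char p x)"

end

(*
  Write the nonzero elements as w^l with 0 <= l < L = q^m - 1 and split the quadratic Gauss sum
  G = sum_l (-1)^l psi(w^l) into the N periods e(c) = sum over l = c (mod N) of (-1)^l psi(w^l).
  Unwinding the cyclotomic classes, the left-hand side equals eta(w^c) (G - e(c)), so it suffices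
  to show that e(c) = G if N divides c and e(c) = 0 otherwise.

  Since p^j = -1 (mod N) and psi is invariant under Frobenius, e(-c) = e(c); since -1 = w^(L/2)
  and N divides L/2, every e(c) is real. A direct computation gives the autocorrelation
  sum_c e(c) e(c + d) = q^m [N | d], so the discrete Fourier transforms F(k) = sum_c e(c) zeta_N^(ck)
  are real with F(k)^2 = q^m, i.e. F(k) = +- p^(js). Hence N e(0) = sum_k F(k) = a p^(js) with a odd
  and |a| <= N. As (p - 1) e(0) is a rational integer and N is prime to p (p - 1), N divides a, so
  e(0) = +- p^(js). Now sum_c e(c)^2 = q^m forces e(c) = 0 for c not divisible by N, and finally
  G = sum_c e(c) = e(0).
*)

theory Submission
  imports Defs "HOL-Computational_Algebra.Primes" "HOL-Computational_Algebra.Polynomial"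
begin

section \<open>Roots of unity and periodic sums over residues\<close>

definition unit_root :: "nat \<Rightarrow> int \<Rightarrow> complex" where
  "unit_root M x = cis (2 * pi * of_int x / real M)"

lemma unit_root_add: "unit_root M (x + y) = unit_root M x * unit_root M y"
  unfolding unit_root_def cis_mult by (simp add: add_divide_distrib ring_distribs)

lemma unit_root_multiple: "unit_root M (int M * t) = 1"
proof (cases "M = 0")
  case False
  then have "2 * pi * real_of_int (int M * t) / real M = 2 * pi * real_of_int t"
    by simp
  then show ?thesis
    unfolding unit_root_def by simp
qed (simp add: unit_root_def)

lemma unit_root_mod: "unit_root M (x mod int M) = unit_root M x"
proof -
  have "unit_root M x = unit_root M (x mod int M + int M * (x div int M))"
    by simp
  then show ?thesis
    unfolding unit_root_add unit_root_multiple by simp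
qed

lemma unit_root_cong: "x mod int M = y mod int M \<Longrightarrow> unit_root M x = unit_root M y"
  by (metis unit_root_mod)

lemma unit_root_power: "unit_root M x ^ k = unit_root M (x * int k)"
  unfolding unit_root_def Complex.DeMoivre by (simp add: field_simps)

lemma cnj_unit_root: "cnj (unit_root M x) = unit_root M (- x)"
  unfolding unit_root_def cis_cnj by simp

lemma norm_unit_root: "norm (unit_root M x) = 1"
  unfolding unit_root_def by simp

lemma unit_root_eq_1_iff:
  assumes "M > 0"
  shows "unit_root M x = 1 \<longleftrightarrow> int M dvd x"
proof
  assume "unit_root M x = 1"
  then have "cos (2 * pi * of_int x / real M) = 1"
    unfolding unit_root_def by (metis cis.sel(1) one_complex.sel(1))
  then obtain k :: int where "2 * pi * of_int x / real M = of_int k * 2 * pi"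
    unfolding cos_one_2pi_int by blast
  then have "real_of_int x = real_of_int (k * int M)"
    using assms by (simp add: field_simps)
  then show "int M dvd x"
    by (metis dvd_triv_right of_int_eq_iff)
qed (auto simp: unit_root_multiple)

lemma sum_periodic_reindex_affine:
  fixes f :: "int \<Rightarrow> 'b::comm_monoid_add" and M a b :: int
  assumes "M > 0" and periodic: "\<And>x. f (x mod M) = f x" and "coprime a M"
  shows "(\<Sum>x\<in>{0..<M}. f (a * x + b)) = (\<Sum>x\<in>{0..<M}. f x)"
proof -
  define g where "g x = (a * x + b) mod M" for x
  have "inj_on g {0..<M}"
  proof (rule inj_onI)
    fix x y assume "x \<in> {0..<M}" "y \<in> {0..<M}" "g x = g y"
    then have "M dvd a * (x - y)"
      unfolding g_def by (simp add: mod_eq_dvd_iff algebra_simps)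
    then have "M dvd x - y"
      using \<open>coprime a M\<close> by (simp add: coprime_commute coprime_dvd_mult_right_iff)
    with \<open>x \<in> {0..<M}\<close> \<open>y \<in> {0..<M}\<close> show "x = y"
      by (metis atLeastLessThan_iff mod_eq_dvd_iff mod_pos_pos_trivial)
  qed
  moreover have "g ` {0..<M} \<subseteq> {0..<M}"
    unfolding g_def using \<open>M > 0\<close> by auto
  ultimately have "bij_betw g {0..<M} {0..<M}"
    by (simp add: bij_betw_def endo_inj_surj)
  then have "(\<Sum>x\<in>{0..<M}. f (g x)) = (\<Sum>x\<in>{0..<M}. f x)"
    by (rule sum.reindex_bij_betw)
  then show ?thesis
    unfolding g_def periodic .
qed

lemma sum_periodic_shift:
  fixes f :: "int \<Rightarrow> 'b::comm_monoid_add" and M b :: int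
  assumes "M > 0" and "\<And>x. f (x mod M) = f x"
  shows "(\<Sum>x\<in>{0..<M}. f (x + b)) = (\<Sum>x\<in>{0..<M}. f x)"
  using sum_periodic_reindex_affine[of M f 1 b] assms by simp

lemma sum_residues_dvd_diff:
  fixes M :: int
  assumes "M > 0"
  shows "(\<Sum>c\<in>{0..<M}. if M dvd l - c then f c else 0) = f (l mod M)"
proof -
  have "M dvd l - c \<longleftrightarrow> c = l mod M" if "c \<in> {0..<M}" for c
    using that by (auto simp: mod_eq_dvd_iff[symmetric])
  then have "(\<Sum>c\<in>{0..<M}. if M dvd l - c then f c else 0)
      = (\<Sum>c\<in>{0..<M}. if c = l mod M then f c else 0)"
    by (intro sum.cong) auto
  also have "\<dots> = f (l mod M)"
    using assms by simp
  finally show ?thesis .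
qed

lemma sum_int_first_term:
  fixes M :: int
  assumes "M > 0"
  shows "(\<Sum>x\<in>{0..<M}. f x) = f 0 + (\<Sum>x\<in>{1..<M}. f x)"
proof -
  have "{0..<M} = insert 0 {1..<M}"
    using assms by auto
  then show ?thesis
    by simp
qed

lemma sum_unit_root:
  assumes "M > 0"
  shows "(\<Sum>k\<in>{0..<int M}. unit_root M (x * k)) = (if int M dvd x then of_nat M else 0)"
proof (cases "int M dvd x")
  case True
  then show ?thesis
    by (auto simp: unit_root_multiple mult.assoc)
next
  case False
  define S where "S = (\<Sum>k\<in>{0..<int M}. unit_root M (x * k))"
  have "(\<Sum>k\<in>{0..<int M}. unit_root M (x * (k + 1))) = S"
    unfolding S_def
    by (rule sum_periodic_shift[where f = "\<lambda>k. unit_root M (x * k)"])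
       (use assms in \<open>auto intro: unit_root_cong simp: mod_mult_right_eq\<close>)
  then have "S * unit_root M x = S"
    by (simp add: S_def sum_distrib_right ring_distribs unit_root_add)
  then have "S * (unit_root M x - 1) = 0"
    by (simp add: algebra_simps)
  moreover have "unit_root M x \<noteq> 1"
    using False assms unit_root_eq_1_iff by blast
  ultimately have "S = 0"
    by simp
  then show ?thesis
    using False unfolding S_def by simp
qed

lemma sum_powers_root_of_unity:
  fixes z :: complex
  assumes "z ^ P = 1" and "P > 0"
  shows "(\<Sum>a\<in>{1..<P}. z ^ a) = (if z = 1 then of_nat P - 1 else -1)"
proof -
  have "(\<Sum>a<P. z ^ a) = 1 + (\<Sum>a\<in>{1..<P}. z ^ a)"
    using assms(2) by (simp add: sum.atLeast_Suc_lessThan atLeast0LessThan[symmetric])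
  moreover have "(\<Sum>a<P. z ^ a) = 0" if "z \<noteq> 1"
    using geometric_sum[OF that, of P] assms(1) by simp
  ultimately show ?thesis
    by (auto simp: eq_neg_iff_add_eq_0 add.commute)
qed

lemma odd_multiple_in_range:
  fixes a N :: int
  assumes "N dvd a" and "odd a" and "\<bar>a\<bar> \<le> N"
  shows "a = N \<or> a = - N"
proof -
  obtain t where t: "a = N * t"
    using assms(1) by blast
  then have "odd t" "N \<noteq> 0"
    using assms(2) by auto
  then have "N > 0"
    using assms(3) abs_ge_zero[of a] by linarith
  have "1 \<le> \<bar>t\<bar>"
    using \<open>odd t\<close> by (cases "t = 0") auto
  moreover have "N * \<bar>t\<bar> \<le> N * 1"
    using assms(3) t \<open>N > 0\<close> by (simp add: abs_mult)
  ultimately have "\<bar>t\<bar> = 1"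
    using \<open>N > 0\<close> by (simp add: mult_le_cancel_left)
  then show ?thesis
    using t by (auto simp: abs_if split: if_splits)
qed

section \<open>Finite fields and the canonical additive character\<close>

lemma nonzero_power_card_minus_1:
  fixes x :: "'a::{field,finite}"
  assumes "x \<noteq> 0"
  shows "x ^ (CARD('a) - 1) = 1"
proof -
  have "(\<Prod>y\<in>UNIV - {0}. x * y) = (\<Prod>y\<in>UNIV - {0}. y)"
    by (rule prod.reindex_bij_witness[of _ "\<lambda>y. y / x" "\<lambda>y. x * y"]) (use assms in auto)
  moreover have "card (UNIV - {0::'a}) = CARD('a) - 1"
    by (simp add: card_Diff_singleton)
  moreover have "(\<Prod>y\<in>UNIV - {0::'a}. y) \<noteq> 0"
    by simp
  ultimately show ?thesis
    by (simp add: prod.distrib)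
qed

lemma of_nat_card_eq_0: "of_nat CARD('a::{ring_1,finite}) = (0::'a)"
proof -
  have "(\<Sum>y\<in>UNIV. y + 1) = (\<Sum>y\<in>(UNIV::'a set). y)"
    by (rule sum.reindex_bij_witness[of _ "\<lambda>y. y - 1" "\<lambda>y. y + 1"]) auto
  then show ?thesis
    by (simp add: sum.distrib)
qed

locale finite_field_char =
  fixes p n :: nat
  assumes prime_p: "prime p" and card_eq: "CARD('a::{field,finite}) = p ^ n"
begin

lemma p_gt_1: "p > 1"
  using prime_p by (rule prime_gt_1_nat)

lemma n_pos: "n > 0"
proof (rule ccontr)
  assume "\<not> n > 0"
  then have "CARD('a) = 1"
    using card_eq by simp
  moreover have "card {0, 1::'a} \<le> CARD('a)"
    by (rule card_mono) auto
  ultimately show False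
    by simp
qed

lemma CHAR_eq: "CHAR('a) = p"
proof -
  have "prime CHAR('a)"
    by (intro prime_CHAR_semidom finite_imp_CHAR_pos) simp
  moreover have "CHAR('a) dvd p ^ n"
    using of_nat_card_eq_0[where 'a = 'a] card_eq of_nat_eq_0_iff_char_dvd by metis
  ultimately show ?thesis
    using prime_p prime_dvd_power primes_dvd_imp_eq by blast
qed

lemma of_nat_eq_0_iff: "(of_nat k :: 'a) = 0 \<longleftrightarrow> p dvd k"
  by (simp add: of_nat_eq_0_iff_char_dvd CHAR_eq)

lemma of_nat_eq_iff: "(of_nat a :: 'a) = of_nat b \<longleftrightarrow> a mod p = b mod p"
proof -
  have "(of_nat a :: 'a) = of_nat b \<longleftrightarrow> (of_int (int a - int b) :: 'a) = 0"
    by simp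
  also have "\<dots> \<longleftrightarrow> int CHAR('a) dvd int a - int b"
    by (rule of_int_eq_0_iff_char_dvd)
  also have "\<dots> \<longleftrightarrow> int a mod int p = int b mod int p"
    by (simp add: CHAR_eq mod_eq_dvd_iff)
  finally show ?thesis
    by (metis of_nat_eq_iff zmod_int)
qed

lemma add_power_prime_power: "(x + y :: 'a) ^ (p ^ k) = x ^ (p ^ k) + y ^ (p ^ k)"
  by (rule freshmans_dream') (simp_all add: CHAR_eq prime_p)

lemma sum_power_prime: "(sum f A :: 'a) ^ p = (\<Sum>i\<in>A. f i ^ p)"
  by (rule freshmans_dream_sum) (simp_all add: CHAR_eq prime_p)

lemma of_nat_power_prime: "(of_nat k :: 'a) ^ p = of_nat k"
  using sum_power_prime[of "\<lambda>_. 1" "{..<k}"] by simp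

lemma power_card_eq_same: "(x :: 'a) ^ (p ^ n) = x"
proof (cases "x = 0")
  case False
  have "x ^ (p ^ n) = x * x ^ (CARD('a) - 1)"
    using p_gt_1 by (simp add: card_eq flip: power_Suc)
  then show ?thesis
    using nonzero_power_card_minus_1[OF False] by simp
qed (use p_gt_1 in simp)

text \<open>The prime field is the fixed field of Frobenius: \<open>x\<^sup>p - x\<close> has at most \<open>p\<close> roots.\<close>

lemma power_prime_eq_self_imp_of_nat:
  assumes "(y :: 'a) ^ p = y"
  shows "\<exists>k<p. y = of_nat k"
proof -
  define P :: "'a poly" where "P = monom 1 p + - monom 1 1"
  have "degree P = p"
    unfolding P_def using p_gt_1 by (subst degree_add_eq_left) (simp_all add: degree_monom_eq)
  then have "P \<noteq> 0"
    using p_gt_1 by auto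
  have roots: "{x. poly P x = 0} = {x. x ^ p = x}"
    by (auto simp: P_def poly_monom)
  have "inj_on (of_nat :: nat \<Rightarrow> 'a) {..<p}"
    by (auto intro!: inj_onI simp: of_nat_eq_iff)
  then have "card (of_nat ` {..<p} :: 'a set) = p"
    by (simp add: card_image)
  moreover have "card {x. poly P x = 0} \<le> p"
    using card_poly_roots_bound[OF \<open>P \<noteq> 0\<close>] \<open>degree P = p\<close> by simp
  moreover have "of_nat ` {..<p} \<subseteq> {x::'a. poly P x = 0}"
    using of_nat_power_prime roots by auto
  ultimately have "of_nat ` {..<p} = {x::'a. poly P x = 0}"
    by (intro card_seteq) (simp_all add: finite_subset)
  then show ?thesis
    using assms roots by auto
qed

abbreviation Tr :: "'a \<Rightarrow> 'a" where
  "Tr \<equiv> abs_trace p"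

lemma ext_degree_eq: "ext_degree p TYPE('a) = n"
  unfolding ext_degree_def card_eq
  using power_inject_exp[OF p_gt_1] by (intro the_equality) auto

lemma abs_trace_eq: "Tr x = (\<Sum>i<n. x ^ p ^ i)"
  unfolding abs_trace_def ext_degree_eq ..

lemma abs_trace_add: "Tr (x + y) = Tr x + Tr y"
  unfolding abs_trace_eq by (simp add: add_power_prime_power sum.distrib)

lemma abs_trace_shift: "(\<Sum>i<n. x ^ p ^ Suc i) = Tr x"
proof -
  have "x + (\<Sum>i<n. x ^ p ^ Suc i) = (\<Sum>i<Suc n. x ^ p ^ i)"
    by (simp only: sum.lessThan_Suc_shift) simp
  also have "\<dots> = Tr x + x"
    by (simp add: abs_trace_eq power_card_eq_same)
  finally show ?thesis
    by (simp add: add.commute)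
qed

lemma abs_trace_power_prime: "Tr x ^ p = Tr x"
proof -
  have "Tr x ^ p = (\<Sum>i<n. x ^ p ^ Suc i)"
    unfolding abs_trace_eq sum_power_prime by (simp flip: power_mult add: mult.commute)
  then show ?thesis
    by (simp only: abs_trace_shift)
qed

lemma abs_trace_of_power_prime: "Tr (x ^ p) = Tr x"
proof -
  have "Tr (x ^ p) = (\<Sum>i<n. x ^ p ^ Suc i)"
    unfolding abs_trace_eq by (simp flip: power_mult)
  then show ?thesis
    by (simp only: abs_trace_shift)
qed

text \<open>\<open>Tr\<close> is a polynomial of degree \<open>p\<^sup>n\<^sup>-\<^sup>1 < p\<^sup>n\<close>, so it cannot vanish identically.\<close>

lemma abs_trace_nonzero: "\<exists>y. Tr y \<noteq> 0"
proof (rule ccontr)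
  assume "\<not> (\<exists>y. Tr y \<noteq> 0)"
  define P :: "'a poly" where "P = (\<Sum>i<n. monom 1 (p ^ i))"
  have coeff_P: "coeff P k = (\<Sum>i<n. if p ^ i = k then 1 else 0)" for k
    unfolding P_def coeff_sum by simp
  have "coeff P (p ^ (n - 1)) = (\<Sum>i<n. if i = n - 1 then 1 else 0)"
    unfolding coeff_P using power_inject_exp[OF p_gt_1] by (intro sum.cong) auto
  then have "P \<noteq> 0"
    using n_pos by auto
  have "degree P \<le> p ^ (n - 1)"
  proof (rule degree_le, intro allI impI)
    fix k assume "p ^ (n - 1) < k"
    moreover have "p ^ i \<le> p ^ (n - 1)" if "i < n" for i
      using that p_gt_1 by (intro power_increasing) auto
    ultimately show "coeff P k = 0"
      unfolding coeff_P by (intro sum.neutral) fastforce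
  qed
  moreover have "{y. poly P y = 0} = UNIV"
    using \<open>\<not> (\<exists>y. Tr y \<noteq> 0)\<close> by (auto simp: P_def poly_sum poly_monom abs_trace_eq)
  ultimately have "p ^ n \<le> p ^ (n - 1)"
    using card_poly_roots_bound[OF \<open>P \<noteq> 0\<close>] card_eq by simp
  then show False
    using p_gt_1 n_pos by simp
qed

lemma trace_nat: "trace_nat p x < p" "of_nat (trace_nat p x) = Tr x"
proof -
  obtain k where k: "k < p" "Tr x = of_nat k"
    using power_prime_eq_self_imp_of_nat[OF abs_trace_power_prime] by blast
  have "\<exists>!k. k < p \<and> of_nat k = Tr x"
    using k by (intro ex1I[of _ k]) (auto simp: of_nat_eq_iff)
  then have "trace_nat p x < p \<and> of_nat (trace_nat p x) = Tr x"
    unfolding trace_nat_def by (rule theI')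
  then show "trace_nat p x < p" "of_nat (trace_nat p x) = Tr x"
    by auto
qed

abbreviation \<psi> :: "'a \<Rightarrow> complex" where
  "\<psi> \<equiv> can_add_char p"

lemma can_add_char_eq: "\<psi> x = unit_root p (int (trace_nat p x))"
  unfolding can_add_char_def unit_root_def by simp

lemma can_add_char_add: "\<psi> (x + y) = \<psi> x * \<psi> y"
proof -
  have "(of_nat (trace_nat p (x + y)) :: 'a) = of_nat (trace_nat p x + trace_nat p y)"
    by (simp add: trace_nat abs_trace_add)
  then have "int (trace_nat p (x + y)) mod int p = int (trace_nat p x + trace_nat p y) mod int p"
    unfolding of_nat_eq_iff by (metis zmod_int)
  then have "unit_root p (int (trace_nat p (x + y)))
      = unit_root p (int (trace_nat p x) + int (trace_nat p y))"
    by (intro unit_root_cong) simp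
  then show ?thesis
    unfolding can_add_char_eq unit_root_add .
qed

lemma can_add_char_nonzero: "\<psi> x \<noteq> 0"
  unfolding can_add_char_def by simp

lemma can_add_char_0: "\<psi> 0 = 1"
  using can_add_char_add[of 0 0] can_add_char_nonzero[of 0] by simp

lemma norm_can_add_char: "norm (\<psi> x) = 1"
  unfolding can_add_char_eq by (rule norm_unit_root)

lemma can_add_char_uminus: "\<psi> (- x) = cnj (\<psi> x)"
proof -
  have "\<psi> x * \<psi> (- x) = 1"
    using can_add_char_add[of x "- x"] can_add_char_0 by simp
  moreover have "\<psi> x * cnj (\<psi> x) = 1"
    using complex_norm_square[of "\<psi> x"] norm_can_add_char[of x] by simp
  ultimately show ?thesis
    using can_add_char_nonzero[of x] mult_left_cancel by metis
qed

lemma can_add_char_power_prime: "\<psi> (x ^ p) = \<psi> x"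
  unfolding can_add_char_def trace_nat_def abs_trace_of_power_prime ..

lemma can_add_char_power_prime_power: "\<psi> (x ^ p ^ k) = \<psi> x"
proof (induction k)
  case (Suc k)
  have "x ^ p ^ Suc k = (x ^ p ^ k) ^ p"
    by (metis power_Suc2 power_mult)
  then show ?case
    using Suc.IH can_add_char_power_prime by simp
qed simp

lemma can_add_char_power_eq_1: "\<psi> x ^ p = 1"
  unfolding can_add_char_eq unit_root_power by (simp add: mult.commute unit_root_multiple)

lemma can_add_char_times_of_nat: "\<psi> (x * of_nat a) = \<psi> x ^ a"
  by (induction a) (simp_all add: can_add_char_0 can_add_char_add distrib_left)

lemma can_add_char_nontrivial: "\<exists>y. \<psi> y \<noteq> 1"
proof -
  obtain y where "Tr y \<noteq> 0"
    using abs_trace_nonzero by blast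
  then have "\<not> p dvd trace_nat p y"
    using trace_nat[of y] by (auto dest: dvd_imp_le)
  then show ?thesis
    using p_gt_1 by (auto simp: can_add_char_eq unit_root_eq_1_iff)
qed

lemma sum_can_add_char: "(\<Sum>x\<in>UNIV. \<psi> (x * b)) = (if b = 0 then of_nat (p ^ n) else 0)"
proof (cases "b = 0")
  case True
  then show ?thesis
    by (simp add: can_add_char_0 card_eq)
next
  case False
  obtain y where y: "\<psi> y \<noteq> 1"
    using can_add_char_nontrivial by blast
  define S where "S = (\<Sum>x\<in>UNIV. \<psi> x)"
  have "(\<Sum>x\<in>UNIV. \<psi> (x + y)) = S"
    unfolding S_def by (rule sum.reindex_bij_witness[of _ "\<lambda>x. x - y" "\<lambda>x. x + y"]) auto
  then have "S * \<psi> y = S"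
    by (simp add: S_def can_add_char_add sum_distrib_right)
  then have "S * (\<psi> y - 1) = 0"
    by (simp add: algebra_simps)
  then have "S = 0"
    using y by simp
  moreover have "(\<Sum>x\<in>UNIV. \<psi> (x * b)) = S"
    unfolding S_def
    by (rule sum.reindex_bij_witness[of _ "\<lambda>x. x / b" "\<lambda>x. x * b"]) (use False in auto)
  ultimately show ?thesis
    using False by simp
qed

end

section \<open>Powers of a primitive element\<close>

lemma mem_cyclotomic_class:
  "y \<in> cyclotomic_class w M i \<longleftrightarrow> (\<exists>k. y = w powi (i + int M * k))"
  unfolding cyclotomic_class_def by auto

locale finite_field_primitive = finite_field_char p n
  for p n :: nat +
  fixes w :: "'a::{field,finite}"
  assumes primitive: "primitive_elem w"
begin

definition L :: nat where
  "L = p ^ n - 1"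

lemma card_eq_L: "p ^ n = L + 1"
  using one_less_power[OF p_gt_1 n_pos] by (simp add: L_def)

lemma L_pos: "L > 0"
  using one_less_power[OF p_gt_1 n_pos] by (simp add: L_def)

lemma w_nonzero: "w \<noteq> 0"
  using primitive unfolding primitive_elem_def by blast

lemma power_L_eq_1: "x \<noteq> 0 \<Longrightarrow> (x :: 'a) ^ L = 1"
  using nonzero_power_card_minus_1[of x] by (simp add: L_def card_eq)

lemma w_power_mod: "w ^ k = w ^ (k mod L)"
proof -
  have "w ^ k = w ^ (L * (k div L) + k mod L)"
    by simp
  also have "\<dots> = (w ^ L) ^ (k div L) * w ^ (k mod L)"
    by (simp only: power_add power_mult)
  finally show ?thesis
    by (simp add: power_L_eq_1 w_nonzero)
qed

lemma w_powers_surj: "(\<lambda>k. w ^ k) ` {..<L} = UNIV - {0}"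
proof
  show "(\<lambda>k. w ^ k) ` {..<L} \<subseteq> UNIV - {0}"
    using w_nonzero by auto
  show "UNIV - {0} \<subseteq> (\<lambda>k. w ^ k) ` {..<L}"
  proof
    fix x :: 'a assume "x \<in> UNIV - {0}"
    then obtain k :: nat where "x = w ^ k"
      using primitive unfolding primitive_elem_def by blast
    moreover have "k mod L \<in> {..<L}"
      using L_pos by simp
    ultimately show "x \<in> (\<lambda>k. w ^ k) ` {..<L}"
      using w_power_mod[of k] by blast
  qed
qed

lemma w_powers_inj: "inj_on (\<lambda>k. w ^ k) {..<L}"
proof -
  have "card (UNIV - {0::'a}) = L"
    by (simp add: card_Diff_singleton card_eq L_def)
  then show ?thesis
    by (intro eq_card_imp_inj_on) (simp_all add: w_powers_surj)
qed

lemma w_powi_eq_power_mod: "w powi l = w ^ nat (l mod int L)"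
proof -
  have "w powi l = w powi (int L * (l div int L)) * w powi (l mod int L)"
    by (simp add: w_nonzero flip: power_int_add)
  also have "w powi (int L * (l div int L)) = 1"
    by (simp add: power_int_mult w_nonzero power_L_eq_1)
  also have "w powi (l mod int L) = w ^ nat (l mod int L)"
    using L_pos by (simp flip: power_int_of_nat)
  finally show ?thesis
    by simp
qed

lemma w_powi_eq_iff: "w powi a = w powi b \<longleftrightarrow> a mod int L = b mod int L"
proof -
  have "nat (l mod int L) \<in> {..<L}" for l
    using L_pos by (simp add: nat_less_iff)
  then have "w powi a = w powi b \<longleftrightarrow> nat (a mod int L) = nat (b mod int L)"
    unfolding w_powi_eq_power_mod by (intro inj_on_eq_iff[OF w_powers_inj])
  also have "\<dots> \<longleftrightarrow> a mod int L = b mod int L"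
    using L_pos by (intro eq_nat_nat_iff) simp_all
  finally show ?thesis .
qed

lemma w_powi_add: "w powi (a + b) = w powi a * w powi b"
  by (simp add: power_int_add w_nonzero)

lemma w_powi_mod: "w powi (l mod int L) = w powi l"
  unfolding w_powi_eq_iff by simp

lemma w_powi_nonzero: "w powi l \<noteq> 0"
  using w_nonzero by simp

lemma bij_betw_w_powi: "bij_betw (\<lambda>l. w powi l) {0..<int L} (UNIV - {0})"
proof (rule bij_betw_imageI)
  show "inj_on (\<lambda>l. w powi l) {0..<int L}"
    by (rule inj_onI) (simp add: w_powi_eq_iff)
  have "{0..<int L} = int ` {..<L}"
    by (simp add: image_int_atLeastLessThan lessThan_atLeast0)
  then show "(\<lambda>l. w powi l) ` {0..<int L} = UNIV - {0}"
    using w_powers_surj by (simp add: image_image)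
qed

lemma sum_nonzero_eq_sum_w_powi:
  "(\<Sum>x\<in>UNIV - {0}. f x) = (\<Sum>l\<in>{0..<int L}. f (w powi l))"
  using sum.reindex_bij_betw[OF bij_betw_w_powi, of f] by simp

lemma char_sum_w_powi_image:
  "char_sum p ((\<lambda>l. w powi l) ` {l \<in> {0..<int L}. P l})
     = (\<Sum>l\<in>{0..<int L}. if P l then \<psi> (w powi l) else 0)"
proof -
  have "inj_on (\<lambda>l. w powi l) {l \<in> {0..<int L}. P l}"
    using bij_betw_w_powi by (rule bij_betw_imp_inj_on[THEN inj_on_subset]) auto
  then have "char_sum p ((\<lambda>l. w powi l) ` {l \<in> {0..<int L}. P l})
      = (\<Sum>l\<in>{l \<in> {0..<int L}. P l}. \<psi> (w powi l))"
    unfolding char_sum_def by (simp only: sum.reindex comp_def)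
  also have "\<dots> = (\<Sum>l\<in>{0..<int L}. if P l then \<psi> (w powi l) else 0)"
    by (rule sum.inter_filter) simp
  finally show ?thesis .
qed

lemma sum_can_add_char_w_powi:
  "(\<Sum>l\<in>{0..<int L}. \<psi> (w powi l * b)) = (if b = 0 then of_nat L else -1)"
proof -
  have "(\<Sum>x\<in>UNIV. \<psi> (x * b)) = \<psi> (0 * b) + (\<Sum>x\<in>UNIV - {0}. \<psi> (x * b))"
    by (rule sum.remove) auto
  then have "(\<Sum>x\<in>UNIV - {0}. \<psi> (x * b)) = (\<Sum>x\<in>UNIV. \<psi> (x * b)) - 1"
    by (simp add: can_add_char_0)
  then show ?thesis
    using sum_can_add_char[of b] card_eq_L by (simp add: sum_nonzero_eq_sum_w_powi)
qed

lemma quad_char_w_powi: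
  assumes "odd p"
  shows "quad_char (w powi l) = (if even l then 1 else -1)"
proof -
  have "even (int L)"
    using assms by (simp add: L_def)
  have "(\<exists>y. w powi l = y\<^sup>2) \<longleftrightarrow> even l"
  proof
    assume "\<exists>y. w powi l = y\<^sup>2"
    then obtain y where y: "w powi l = y\<^sup>2"
      by blast
    then have "y \<in> UNIV - {0}"
      using w_powi_nonzero[of l] by auto
    then obtain i where "y = w powi i"
      using bij_betw_w_powi unfolding bij_betw_def by auto
    moreover have "w powi (i + i) = w powi i * w powi i"
      by (rule w_powi_add)
    ultimately have "w powi l = w powi (i + i)"
      using y by (simp only: power2_eq_square)
    then have "int L dvd l - (i + i)"
      unfolding w_powi_eq_iff by (simp add: mod_eq_dvd_iff)
    then have "even (l - (i + i))"
      using \<open>even (int L)\<close> by (rule dvd_trans[rotated])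
    then show "even l"
      by presburger
  next
    assume "even l"
    then obtain i where "l = i + i"
      by (auto elim: evenE)
    then have "w powi l = (w powi i)\<^sup>2"
      by (simp only: power2_eq_square w_powi_add)
    then show "\<exists>y. w powi l = y\<^sup>2"
      by blast
  qed
  then show ?thesis
    unfolding quad_char_def using w_powi_nonzero[of l] by simp
qed

lemma translate_cyclotomic_classes:
  assumes "int M dvd int L"
  shows "(\<lambda>x. w powi c * x) ` (\<Union>t\<in>T. cyclotomic_class w M (f t))
    = (\<lambda>l. w powi l) ` {l \<in> {0..<int L}. \<exists>t\<in>T. int M dvd l - c - f t}"
proof (intro equalityI subsetI)
  fix x assume "x \<in> (\<lambda>x. w powi c * x) ` (\<Union>t\<in>T. cyclotomic_class w M (f t))"
  then obtain t y where t: "t \<in> T" and "y \<in> cyclotomic_class w M (f t)" "x = w powi c * y"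
    by blast
  then obtain k where "x = w powi c * w powi (f t + int M * k)"
    unfolding mem_cyclotomic_class by blast
  then have x: "x = w powi (c + (f t + int M * k))"
    by (simp only: w_powi_add)
  define a where "a = c + (f t + int M * k)"
  define l where "l = a mod int L"
  obtain u where u: "int L = int M * u"
    using assms by blast
  have "l = a - int L * (a div int L)"
    unfolding l_def by (simp add: minus_mult_div_eq_mod)
  then have "l - c - f t = int M * (k - u * (a div int L))"
    by (simp add: a_def u algebra_simps)
  then have "int M dvd l - c - f t"
    by simp
  moreover have "l \<in> {0..<int L}" "x = w powi l"
    using L_pos by (simp_all add: l_def a_def x w_powi_mod)
  ultimately show "x \<in> (\<lambda>l. w powi l) ` {l \<in> {0..<int L}. \<exists>t\<in>T. int M dvd l - c - f t}"
    using t by blast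
next
  fix x assume "x \<in> (\<lambda>l. w powi l) ` {l \<in> {0..<int L}. \<exists>t\<in>T. int M dvd l - c - f t}"
  then obtain l t k where "t \<in> T" "x = w powi l" "l - c - f t = int M * k"
    by (auto simp: dvd_def)
  then have t: "t \<in> T" and "x = w powi (c + (f t + int M * k))"
    by (simp_all add: algebra_simps)
  then have x: "x = w powi c * w powi (f t + int M * k)"
    by (simp only: w_powi_add)
  have "w powi (f t + int M * k) \<in> cyclotomic_class w M (f t)"
    unfolding mem_cyclotomic_class by blast
  with t have "w powi (f t + int M * k) \<in> (\<Union>t\<in>T. cyclotomic_class w M (f t))"
    by (rule UN_I)
  then show "x \<in> (\<lambda>x. w powi c * x) ` (\<Union>t\<in>T. cyclotomic_class w M (f t))"
    unfolding x by (rule imageI)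
qed

end

section \<open>Quadratic Gauss periods in the semiprimitive case\<close>

definition parity_sign :: "int \<Rightarrow> complex" where
  "parity_sign l = (if even l then 1 else -1)"

lemma parity_sign_add: "parity_sign (a + b) = parity_sign a * parity_sign b"
  unfolding parity_sign_def by auto

lemma cnj_parity_sign: "cnj (parity_sign a) = parity_sign a"
  unfolding parity_sign_def by simp

lemma parity_sign_mod: "even M \<Longrightarrow> parity_sign (a mod M) = parity_sign a"
  unfolding parity_sign_def by (simp add: dvd_mod_iff)

lemma parity_sign_add_odd: "odd M \<Longrightarrow> parity_sign (a + M) = - parity_sign a"
  unfolding parity_sign_def by auto

lemma dvd_diff_mod_iff:
  fixes N :: int
  shows "N dvd a - (b mod N + d) \<longleftrightarrow> N dvd a - (b + d)"
proof -
  have "a - (b mod N + d) = (a - (b + d)) + (b div N) * N"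
    using div_mult_mod_eq[of b N] by (simp add: algebra_simps)
  then show ?thesis
    by (simp only: dvd_add_times_triv_right_iff)
qed

lemma dvd_shift_iff:
  fixes N :: int
  assumes "N dvd t"
  shows "N dvd x + t - c \<longleftrightarrow> N dvd x - c"
proof -
  have "N dvd (x - c) + t \<longleftrightarrow> N dvd x - c"
    using assms by (rule dvd_add_left_iff)
  then show ?thesis
    by (simp add: algebra_simps)
qed

lemma ex_nonzero_residue_iff:
  assumes "N > 0"
  shows "(\<exists>t\<in>{1..N-1}. int N dvd x - int t) \<longleftrightarrow> \<not> int N dvd x"
proof
  assume "\<exists>t\<in>{1..N-1}. int N dvd x - int t"
  then obtain t where t: "t \<in> {1..N-1}" "int N dvd x - int t"
    by blast
  show "\<not> int N dvd x"
  proof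
    assume "int N dvd x"
    with t(2) have "N dvd t"
      using dvd_diff[of "int N" x "x - int t"] by simp
    then have "N \<le> t"
      using t(1) by (intro dvd_imp_le) auto
    then show False
      using t(1) by (cases N) auto
  qed
next
  assume "\<not> int N dvd x"
  then have x_mod: "x mod int N \<noteq> 0"
    by (simp add: dvd_eq_mod_eq_0)
  have "0 \<le> x mod int N" "x mod int N < int N"
    using assms by simp_all
  define t where "t = nat (x mod int N)"
  then have t: "int t = x mod int N"
    using \<open>0 \<le> x mod int N\<close> by simp
  have "0 < x mod int N"
    using \<open>0 \<le> x mod int N\<close> x_mod by (rule le_neq_trans[OF _ not_sym])
  then have "1 \<le> t" "t < N"
    using t \<open>x mod int N < int N\<close> by linarith+
  then have "t \<in> {1..N-1}"
    unfolding atLeastAtMost_iff by linarith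
  moreover have "int N dvd x - int t"
    unfolding t by (simp add: mod_eq_dvd_iff[symmetric])
  ultimately show "\<exists>t\<in>{1..N-1}. int N dvd x - int t"
    by blast
qed

lemma ex_even_nonzero_residue_iff:
  assumes "odd N"
  shows "(\<exists>t\<in>{1..N-1}. int (2 * N) dvd x - 2 * int t) \<longleftrightarrow> even x \<and> \<not> int N dvd x"
proof (cases "even x")
  case True
  then obtain y where x: "x = 2 * y"
    by (rule evenE)
  have "int (2 * N) dvd x - 2 * int t \<longleftrightarrow> int N dvd y - int t" for t
  proof -
    have "int (2 * N) = 2 * int N" "x - 2 * int t = 2 * (y - int t)"
      by (simp_all add: x)
    then show ?thesis
      by (simp only: dvd_mult_cancel_left) simp
  qed
  then have "(\<exists>t\<in>{1..N-1}. int (2 * N) dvd x - 2 * int t) \<longleftrightarrow> (\<exists>t\<in>{1..N-1}. int N dvd y - int t)"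
    by simp
  also have "\<dots> \<longleftrightarrow> \<not> int N dvd y"
    using assms by (intro ex_nonzero_residue_iff odd_pos)
  also have "\<dots> \<longleftrightarrow> even x \<and> \<not> int N dvd x"
  proof -
    have "coprime (int N) 2"
      using assms by simp
    then have "int N dvd x \<longleftrightarrow> int N dvd y"
      unfolding x by (rule coprime_dvd_mult_right_iff)
    then show ?thesis
      using True by simp
  qed
  finally show ?thesis .
next
  case False
  have "\<not> int (2 * N) dvd x - 2 * int t" for t
  proof
    assume "int (2 * N) dvd x - 2 * int t"
    then have "even (x - 2 * int t)"
      by (auto dest: dvd_mult_left)
    with False show False
      by simp
  qed
  with False show ?thesis
    by simp
qed

locale semiprimitive = finite_field_primitive p n w
  for p n :: nat and w :: "'a::{field,finite}" +
  fixes N j s :: nat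
  assumes odd_p: "odd p" and odd_N: "odd N" and N_ge_2: "N \<ge> 2"
    and n_eq: "n = 2 * j * s" and N_dvd: "N dvd p ^ j + 1"
begin

definition r :: nat where
  "r = p ^ j"

definition H :: int where
  "H = int L div 2"

lemma N_pos: "int N > 0"
  using N_ge_2 by simp

lemma s_pos: "s > 0"
  using n_pos n_eq by simp

lemma odd_r: "odd r"
  unfolding r_def using odd_p by simp

lemma L_eq: "int L = (int r ^ 2) ^ s - 1"
proof -
  have "p ^ n = (r ^ 2) ^ s"
    unfolding r_def n_eq by (simp add: power_mult[symmetric] mult_ac)
  then show ?thesis
    using card_eq_L by (simp flip: of_nat_power)
qed

lemma r_square_minus_1_dvd_L: "(int r + 1) * (int r - 1) dvd int L"
proof -
  have "int r ^ 2 - 1 dvd (int r ^ 2) ^ s - 1"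
    by (simp add: power_diff_1_eq)
  moreover have "int r ^ 2 - 1 = (int r + 1) * (int r - 1)"
    by (simp add: algebra_simps power2_eq_square)
  ultimately show ?thesis
    by (simp add: L_eq)
qed

lemma p_minus_1_dvd_r_minus_1: "int p - 1 dvd int r - 1"
  unfolding r_def using power_diff_1_eq[of "int p" j] by simp

lemma double_N_dvd_r_plus_1: "2 * int N dvd int r + 1"
proof -
  have "int N dvd int r + 1"
    using N_dvd unfolding r_def by (simp add: add.commute flip: int_dvd_int_iff)
  moreover have "2 dvd int r + 1"
    using odd_r by simp
  moreover have "coprime 2 (int N)"
    using odd_N by simp
  ultimately show ?thesis
    by (simp add: divides_mult)
qed

lemma double_N_p_minus_1_dvd_L: "2 * int N * (int p - 1) dvd int L"
  using mult_dvd_mono[OF double_N_dvd_r_plus_1 p_minus_1_dvd_r_minus_1] r_square_minus_1_dvd_L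
  by (rule dvd_trans)

lemma four_dvd_L: "4 dvd int L"
proof -
  have "2 * 2 dvd (int r + 1) * (int r - 1)"
    using odd_r by (intro mult_dvd_mono) simp_all
  then show ?thesis
    using r_square_minus_1_dvd_L by (simp add: dvd_trans)
qed

lemma L_eq_double_H: "int L = 2 * H"
proof -
  have "2 dvd int L"
    using four_dvd_L by (rule dvd_trans[rotated]) simp
  then show ?thesis
    unfolding H_def by simp
qed

lemma even_H: "even H"
  using four_dvd_L L_eq_double_H by presburger

lemma double_N_dvd_L: "2 * int N dvd int L"
  using double_N_p_minus_1_dvd_L by (rule dvd_mult_left)

lemma N_dvd_H: "int N dvd H"
proof -
  have "2 * int N dvd 2 * H"
    using double_N_p_minus_1_dvd_L L_eq_double_H by (metis dvd_mult_left)
  then show ?thesis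
    by simp
qed

lemma N_dvd_L: "int N dvd int L"
  using N_dvd_H by (simp add: L_eq_double_H)

lemma H_bounds: "0 < H" "H < int L"
  using L_eq_double_H L_pos by auto

lemma coprime_N_p: "coprime N p"
proof (rule coprimeI)
  fix d assume "d dvd N" "d dvd p"
  have "j > 0"
    using n_pos n_eq by simp
  then have "d dvd p ^ j"
    using \<open>d dvd p\<close> dvd_power[of j p] dvd_trans by blast
  moreover have "d dvd p ^ j + 1"
    using \<open>d dvd N\<close> N_dvd by (rule dvd_trans)
  ultimately show "is_unit d"
    by (rule dvd_add_right_iff[THEN iffD1])
qed

lemma coprime_N_r: "coprime (int N) (int r)"
  using coprime_N_p unfolding r_def by simp

lemma coprime_N_p_minus_1: "coprime (int N) (int p - 1)"
proof (rule coprimeI)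
  fix d assume d: "d dvd int N" "d dvd int p - 1"
  then have "d dvd int r + 1"
    using double_N_dvd_r_plus_1 by (meson dvd_mult_right dvd_trans)
  moreover have "d dvd int r - 1"
    using d(2) p_minus_1_dvd_r_minus_1 by (rule dvd_trans)
  ultimately have "d dvd 2"
    using dvd_diff[of d "int r + 1" "int r - 1"] by simp
  moreover have "coprime (int N) 2"
    using odd_N by simp
  ultimately show "is_unit d"
    using d(1) coprime_common_divisor by blast
qed

lemma coprime_r_L: "coprime (int r) (int L)"
proof (rule coprimeI)
  fix d assume d: "d dvd int r" "d dvd int L"
  have "int r dvd (int r ^ 2) ^ s"
    using s_pos by (simp flip: power_mult)
  then have "d dvd (int r ^ 2) ^ s - int L"
    using d by (intro dvd_diff) (auto intro: dvd_trans)
  then show "is_unit d"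
    by (simp add: L_eq)
qed

lemma w_powi_H: "w powi H = -1"
proof -
  have "w powi H * w powi H = w powi (H + H)"
    by (simp only: w_powi_add)
  also have "H + H = int L"
    by (simp add: L_eq_double_H)
  finally have "w powi H * w powi H = 1"
    using power_L_eq_1[OF w_nonzero] by simp
  then have "(w powi H - 1) * (w powi H + 1) = 0"
    by (simp add: algebra_simps)
  moreover have "w powi H \<noteq> 1"
  proof
    assume "w powi H = 1"
    then have "w powi H = w powi 0"
      by simp
    then have "H mod int L = 0"
      unfolding w_powi_eq_iff by simp
    then show False
      using H_bounds by simp
  qed
  ultimately show ?thesis
    by (simp add: eq_neg_iff_add_eq_0)
qed

lemma w_powi_eq_minus_1_iff: "m \<in> {0..<int L} \<Longrightarrow> w powi m = -1 \<longleftrightarrow> m = H"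
  using H_bounds by (simp add: w_powi_eq_iff flip: w_powi_H)

definition gauss_term :: "int \<Rightarrow> complex" where
  "gauss_term l = parity_sign l * \<psi> (w powi l)"

definition period :: "int \<Rightarrow> complex" where
  "period c = (\<Sum>l\<in>{0..<int L}. if int N dvd l - c then gauss_term l else 0)"

lemma quad_gauss_sum_eq: "quad_gauss_sum p TYPE('a) = (\<Sum>l\<in>{0..<int L}. gauss_term l)"
  unfolding quad_gauss_sum_def sum_nonzero_eq_sum_w_powi gauss_term_def parity_sign_def
  using quad_char_w_powi[OF odd_p] by simp

lemma even_L: "even (int L)"
  using L_eq_double_H by simp

lemma gauss_term_mod: "gauss_term (l mod int L) = gauss_term l"
  unfolding gauss_term_def by (simp add: parity_sign_mod[OF even_L] w_powi_mod)

lemma N_dvd_mod_L_iff: "int N dvd l mod int L - c \<longleftrightarrow> int N dvd l - c"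
proof -
  have "(l mod int L - c) mod int N = (l mod int L mod int N - c) mod int N"
    by (rule mod_diff_left_eq[symmetric])
  also have "l mod int L mod int N = l mod int N"
    using N_dvd_L by (rule mod_mod_cancel)
  also have "(l mod int N - c) mod int N = (l - c) mod int N"
    by (rule mod_diff_left_eq)
  finally have "(l mod int L - c) mod int N = (l - c) mod int N" .
  then show ?thesis
    by (simp add: dvd_eq_mod_eq_0)
qed

lemma period_mod: "period (c mod int N) = period c"
proof -
  have "int N dvd l - c mod int N \<longleftrightarrow> int N dvd l - c" for l
    by (simp add: dvd_eq_mod_eq_0 mod_diff_right_eq)
  then show ?thesis
    unfolding period_def by simp
qed

lemma sum_period: "(\<Sum>c\<in>{0..<int N}. period c) = quad_gauss_sum p TYPE('a)"
proof -
  have "(\<Sum>c\<in>{0..<int N}. period c)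
      = (\<Sum>l\<in>{0..<int L}. \<Sum>c\<in>{0..<int N}. if int N dvd l - c then gauss_term l else 0)"
    unfolding period_def by (rule sum.swap)
  also have "\<dots> = (\<Sum>l\<in>{0..<int L}. gauss_term l)"
    using sum_residues_dvd_diff[OF N_pos, where f = "\<lambda>_. gauss_term _"] by simp
  finally show ?thesis
    by (simp add: quad_gauss_sum_eq)
qed

text \<open>Translating by \<open>N\<close> flips the parity sign but preserves the residue class mod \<open>N\<close>.\<close>

lemma sum_parity_sign_residue_class:
  "(\<Sum>m\<in>{0..<int L}. if int N dvd m - d then parity_sign m else 0) = 0"
proof -
  define f where "f m = (if int N dvd m - d then parity_sign m else 0)" for m
  have "(\<Sum>m\<in>{0..<int L}. f (m + int N)) = (\<Sum>m\<in>{0..<int L}. f m)"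
    using L_pos by (intro sum_periodic_shift)
      (simp_all add: f_def N_dvd_mod_L_iff parity_sign_mod[OF even_L])
  moreover have "f (m + int N) = - f m" for m
    using odd_N by (simp add: f_def parity_sign_add_odd dvd_shift_iff)
  ultimately have "- (\<Sum>m\<in>{0..<int L}. f m) = (\<Sum>m\<in>{0..<int L}. f m)"
    by (simp add: sum_negf)
  then show ?thesis
    unfolding f_def by simp
qed

lemma gauss_term_mult_shift:
  "gauss_term l * gauss_term (m + l) = parity_sign m * \<psi> (w powi l * (1 + w powi m))"
proof -
  have "parity_sign l * parity_sign (m + l) = parity_sign m"
    unfolding parity_sign_def by auto
  moreover have "\<psi> (w powi l) * \<psi> (w powi (m + l)) = \<psi> (w powi l + w powi l * w powi m)"
    by (simp add: can_add_char_add w_powi_add mult.commute)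
  moreover have "gauss_term l * gauss_term (m + l)
      = (parity_sign l * parity_sign (m + l)) * (\<psi> (w powi l) * \<psi> (w powi (m + l)))"
    unfolding gauss_term_def by (simp add: mult_ac)
  ultimately show ?thesis
    by (simp add: distrib_left)
qed

lemma sum_residue_class_shift:
  assumes "\<And>x. F (x mod int L) = F x"
  shows "(\<Sum>l\<in>{0..<int L}. if int N dvd l + t - c then F (l + t) else 0)
    = (\<Sum>l\<in>{0..<int L}. if int N dvd l - c then F l else 0)"
  using L_pos assms
  by (intro sum_periodic_shift[where f = "\<lambda>l. if int N dvd l - c then F l else 0"])
     (simp_all add: N_dvd_mod_L_iff)

lemma sum_period_products_eq_double_sum:
  "(\<Sum>c\<in>{0..<int N}. period c * period (c + d))
   = (\<Sum>l\<in>{0..<int L}. \<Sum>l'\<in>{0..<int L}.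
        if int N dvd l' - (l + d) then gauss_term l * gauss_term l' else 0)"
proof -
  let ?I = "{0..<int L}" and ?C = "{0..<int N}"
  have "(\<Sum>c\<in>?C. period c * period (c + d))
      = (\<Sum>c\<in>?C. \<Sum>l\<in>?I. \<Sum>l'\<in>?I. if int N dvd l - c
          then (if int N dvd l' - (c + d) then gauss_term l * gauss_term l' else 0) else 0)"
    unfolding period_def sum_product by (intro sum.cong refl) simp
  also have "\<dots> = (\<Sum>l\<in>?I. \<Sum>c\<in>?C. \<Sum>l'\<in>?I. if int N dvd l - c
          then (if int N dvd l' - (c + d) then gauss_term l * gauss_term l' else 0) else 0)"
    by (rule sum.swap)
  also have "\<dots> = (\<Sum>l\<in>?I. \<Sum>l'\<in>?I. \<Sum>c\<in>?C. if int N dvd l - c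
          then (if int N dvd l' - (c + d) then gauss_term l * gauss_term l' else 0) else 0)"
    by (intro sum.cong refl sum.swap)
  also have "\<dots> = (\<Sum>l\<in>?I. \<Sum>l'\<in>?I.
        if int N dvd l' - (l + d) then gauss_term l * gauss_term l' else 0)"
    unfolding sum_residues_dvd_diff[OF N_pos] dvd_diff_mod_iff ..
  finally show ?thesis .
qed

lemma sum_period_products:
  "(\<Sum>c\<in>{0..<int N}. period c * period (c + d))
   = (\<Sum>m\<in>{0..<int L}. if int N dvd m - d
        then parity_sign m * (\<Sum>l\<in>{0..<int L}. \<psi> (w powi l * (1 + w powi m))) else 0)"
proof -
  let ?I = "{0..<int L}"
  define g where "g l l' = (if int N dvd l' - (l + d) then gauss_term l * gauss_term l' else 0)"
    for l l'
  have "(\<Sum>c\<in>{0..<int N}. period c * period (c + d)) = (\<Sum>l\<in>?I. \<Sum>l'\<in>?I. g l l')"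
    unfolding g_def by (rule sum_period_products_eq_double_sum)
  also have "\<dots> = (\<Sum>l\<in>?I. \<Sum>m\<in>?I. g l (m + l))"
    using L_pos
    by (intro sum.cong refl sum_periodic_shift[symmetric])
       (simp_all add: g_def N_dvd_mod_L_iff gauss_term_mod)
  also have "\<dots> = (\<Sum>l\<in>?I. \<Sum>m\<in>?I. if int N dvd m - d
          then parity_sign m * \<psi> (w powi l * (1 + w powi m)) else 0)"
    by (intro sum.cong refl) (simp add: g_def gauss_term_mult_shift)
  also have "\<dots> = (\<Sum>m\<in>{0..<int L}. if int N dvd m - d
        then parity_sign m * (\<Sum>l\<in>{0..<int L}. \<psi> (w powi l * (1 + w powi m))) else 0)"
  proof (subst sum.swap, intro sum.cong refl)
    fix m
    show "(\<Sum>l\<in>?I. if int N dvd m - d then parity_sign m * \<psi> (w powi l * (1 + w powi m)) else 0)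
        = (if int N dvd m - d
           then parity_sign m * (\<Sum>l\<in>?I. \<psi> (w powi l * (1 + w powi m))) else 0)"
      by (cases "int N dvd m - d") (simp_all add: sum_distrib_left)
  qed
  finally show ?thesis .
qed

lemma period_autocorrelation:
  "(\<Sum>c\<in>{0..<int N}. period c * period (c + d)) = (if int N dvd d then of_nat (p ^ n) else 0)"
proof -
  let ?I = "{0..<int L}"
  have "(if int N dvd m - d
        then parity_sign m * (\<Sum>l\<in>?I. \<psi> (w powi l * (1 + w powi m))) else 0)
      = (if m = H then (if int N dvd m - d then parity_sign m * of_nat (p ^ n) else 0) else 0)
        - (if int N dvd m - d then parity_sign m else 0)" if "m \<in> ?I" for m
  proof -
    have "1 + w powi m = 0 \<longleftrightarrow> m = H"
      using w_powi_eq_minus_1_iff[OF that] by (auto simp: add_eq_0_iff)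
    then have "(\<Sum>l\<in>?I. \<psi> (w powi l * (1 + w powi m))) = (if m = H then of_nat L else -1)"
      unfolding sum_can_add_char_w_powi by simp
    then show ?thesis
      using card_eq_L by (auto simp: algebra_simps)
  qed
  then have "(\<Sum>c\<in>{0..<int N}. period c * period (c + d))
      = (\<Sum>m\<in>?I. if m = H then (if int N dvd m - d then parity_sign m * of_nat (p ^ n) else 0) else 0)
        - (\<Sum>m\<in>?I. if int N dvd m - d then parity_sign m else 0)"
    unfolding sum_period_products sum_subtractf[symmetric] by (intro sum.cong) auto
  also have "\<dots> = (if int N dvd H - d then of_nat (p ^ n) else 0)"
    using H_bounds even_H by (simp add: sum_parity_sign_residue_class parity_sign_def)
  also have "int N dvd H - d \<longleftrightarrow> int N dvd d"
    using dvd_shift_iff[OF N_dvd_H, of 0 d] by simp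
  finally show ?thesis .
qed

text \<open>\<open>-1 = w\<^sup>H\<close> with \<open>N\<close> dividing \<open>H\<close>, so negating the argument of \<open>\<psi>\<close> permutes each class.\<close>

lemma cnj_period: "cnj (period c) = period c"
proof -
  have "cnj (period c)
      = (\<Sum>l\<in>{0..<int L}. if int N dvd l - c then parity_sign l * cnj (\<psi> (w powi l)) else 0)"
    unfolding period_def gauss_term_def cnj_sum by (intro sum.cong refl) (simp add: cnj_parity_sign)
  also have "\<dots> = (\<Sum>l\<in>{0..<int L}. if int N dvd l + H - c then gauss_term (l + H) else 0)"
  proof (intro sum.cong refl)
    fix l
    have "gauss_term (l + H) = parity_sign l * cnj (\<psi> (w powi l))"
      using even_H
      by (simp add: gauss_term_def parity_sign_add parity_sign_def w_powi_add w_powi_H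
          flip: can_add_char_uminus)
    then show "(if int N dvd l - c then parity_sign l * cnj (\<psi> (w powi l)) else 0)
        = (if int N dvd l + H - c then gauss_term (l + H) else 0)"
      by (simp add: dvd_shift_iff[OF N_dvd_H])
  qed
  also have "\<dots> = period c"
    unfolding period_def by (rule sum_residue_class_shift) (rule gauss_term_mod)
  finally show ?thesis .
qed

lemma period_frobenius: "period (int r * c) = period c"
proof -
  define g where "g x = (if int N dvd x - int r * c then gauss_term x else 0)" for x
  have "period (int r * c) = (\<Sum>x\<in>{0..<int L}. g (int r * x + 0))"
    unfolding period_def g_def[symmetric] using L_pos coprime_r_L
    by (intro sum_periodic_reindex_affine[symmetric])
       (simp_all add: g_def N_dvd_mod_L_iff gauss_term_mod)
  also have "\<dots> = period c"
    unfolding period_def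
  proof (intro sum.cong refl)
    fix x
    have "int N dvd int r * x - int r * c \<longleftrightarrow> int N dvd x - c"
      using coprime_N_r by (simp add: coprime_dvd_mult_right_iff flip: right_diff_distrib)
    moreover have "parity_sign (int r * x) = parity_sign x"
      using odd_r by (simp add: parity_sign_def)
    moreover have "w powi (int r * x) = (w powi x) ^ p ^ j"
      by (simp add: r_def power_int_mult mult.commute flip: power_int_of_nat)
    ultimately show "g (int r * x + 0) = (if int N dvd x - c then gauss_term x else 0)"
      by (simp add: g_def gauss_term_def can_add_char_power_prime_power)
  qed
  finally show ?thesis .
qed

lemma period_uminus: "period (- c) = period c"
proof -
  have "int N dvd int r + 1"
    using double_N_dvd_r_plus_1 by (rule dvd_mult_right)
  then have "int N dvd (int r + 1) * c"
    by (rule dvd_mult2)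
  then have "(int r * c) mod int N = (- c) mod int N"
    by (simp add: mod_eq_dvd_iff algebra_simps)
  then show ?thesis
    by (metis period_frobenius period_mod)
qed

lemma of_nat_eq_w_powi_multiple_2N:
  assumes "0 < a" "a < p"
  obtains k where "(of_nat a :: 'a) = w powi k" "2 * int N dvd k"
proof -
  have "(of_nat a :: 'a) \<noteq> 0"
    using assms by (auto simp: of_nat_eq_0_iff dest: dvd_imp_le)
  then obtain k where k: "(of_nat a :: 'a) = w powi k"
    using bij_betw_w_powi unfolding bij_betw_def by (metis DiffI UNIV_I imageE singletonD)
  have "(of_nat a :: 'a) * of_nat a ^ (p - 1) = of_nat a * 1"
    using of_nat_power_prime[of a] p_gt_1 by (simp flip: power_Suc)
  then have "(of_nat a :: 'a) ^ (p - 1) = 1"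
    using \<open>of_nat a \<noteq> 0\<close> by simp
  then have "w powi (k * int (p - 1)) = w powi 0"
    by (simp add: k power_int_mult)
  then have "(k * int (p - 1)) mod int L = 0 mod int L"
    by (simp only: w_powi_eq_iff)
  then have "int L dvd k * (int p - 1)"
    using p_gt_1 by (simp add: dvd_eq_mod_eq_0)
  then have "2 * int N * (int p - 1) dvd k * (int p - 1)"
    using double_N_p_minus_1_dvd_L by (rule dvd_trans[rotated])
  then have "2 * int N dvd k"
    using p_gt_1 by simp
  with k show ?thesis
    using that by blast
qed

text \<open>Multiplying by a nonzero element of the prime field shifts the exponent by a multiple of \<open>2N\<close>.\<close>

lemma period_eq_power_sum:
  assumes "0 < a" "a < p"
  shows "period c
    = (\<Sum>l\<in>{0..<int L}. if int N dvd l - c then parity_sign l * \<psi> (w powi l) ^ a else 0)"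
proof -
  obtain k where k: "(of_nat a :: 'a) = w powi k" "2 * int N dvd k"
    using of_nat_eq_w_powi_multiple_2N[OF assms] .
  then have "int N dvd k" "even k"
    by (auto intro: dvd_mult_left dvd_trans[of 2 "2 * int N"])
  have "period c = (\<Sum>l\<in>{0..<int L}. if int N dvd l + k - c then gauss_term (l + k) else 0)"
    unfolding period_def by (rule sum_residue_class_shift[symmetric]) (rule gauss_term_mod)
  also have "\<dots>
      = (\<Sum>l\<in>{0..<int L}. if int N dvd l - c then parity_sign l * \<psi> (w powi l) ^ a else 0)"
  proof (intro sum.cong refl)
    fix l
    have "gauss_term (l + k) = parity_sign l * \<psi> (w powi l) ^ a"
      using \<open>even k\<close>
      by (simp add: gauss_term_def parity_sign_add parity_sign_def w_powi_add
          flip: k(1) can_add_char_times_of_nat)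
    then show "(if int N dvd l + k - c then gauss_term (l + k) else 0)
        = (if int N dvd l - c then parity_sign l * \<psi> (w powi l) ^ a else 0)"
      by (simp add: dvd_shift_iff[OF \<open>int N dvd k\<close>])
  qed
  finally show ?thesis .
qed

lemma period_times_p_minus_1_Ints: "of_nat (p - 1) * period c \<in> \<int>"
proof -
  let ?s = "\<lambda>l. if \<psi> (w powi l) = 1 then of_nat p - 1 else - 1 :: complex"
  have "of_nat (p - 1) * period c = (\<Sum>a\<in>{1..<p}. period c)"
    by simp
  also have "\<dots> = (\<Sum>a\<in>{1..<p}. \<Sum>l\<in>{0..<int L}.
      if int N dvd l - c then parity_sign l * \<psi> (w powi l) ^ a else 0)"
    by (intro sum.cong refl period_eq_power_sum) auto
  also have "\<dots> = (\<Sum>l\<in>{0..<int L}. if int N dvd l - c then parity_sign l * ?s l else 0)"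
  proof (subst sum.swap, intro sum.cong refl)
    fix l
    have geo: "(\<Sum>a\<in>{1..<p}. \<psi> (w powi l) ^ a) = ?s l"
      using p_gt_1 by (intro sum_powers_root_of_unity can_add_char_power_eq_1) simp
    show "(\<Sum>a\<in>{1..<p}. if int N dvd l - c then parity_sign l * \<psi> (w powi l) ^ a else 0)
        = (if int N dvd l - c then parity_sign l * ?s l else 0)"
      by (cases "int N dvd l - c") (simp_all only: if_True if_False sum.neutral_const
          sum_distrib_left[symmetric] geo)
  qed
  also have "\<dots> \<in> \<int>"
    by (intro Ints_sum) (auto simp: parity_sign_def)
  finally show ?thesis .
qed

subsection \<open>The Fourier transform of the periods\<close>

definition period_transform :: "int \<Rightarrow> complex" where
  "period_transform k = (\<Sum>c\<in>{0..<int N}. period c * unit_root N (c * k))"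

lemma period_real: "period c \<in> \<real>"
  using cnj_period by (simp add: Reals_cnj_iff)

lemma period_transform_real: "cnj (period_transform k) = period_transform k"
proof -
  define g where "g c = period c * unit_root N (c * k)" for c
  have "cnj (period_transform k) = (\<Sum>c\<in>{0..<int N}. g ((- 1) * c + 0))"
    unfolding period_transform_def g_def cnj_sum
    by (simp add: cnj_period cnj_unit_root period_uminus)
  also have "\<dots> = period_transform k"
    unfolding period_transform_def g_def using N_pos
    by (intro sum_periodic_reindex_affine)
       (simp_all add: period_mod unit_root_cong[OF mod_mult_left_eq])
  finally show ?thesis .
qed

lemma sum_period_products_unit_root_shift:
  "(\<Sum>c\<in>{0..<int N}. period c * period c' * unit_root N ((c - c') * k))
   = (\<Sum>x\<in>{0..<int N}. period c' * period (c' + x) * unit_root N (x * k))"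
proof -
  define f where "f c = period c * period c' * unit_root N ((c - c') * k)" for c
  have "(\<Sum>x\<in>{0..<int N}. f (x + c')) = (\<Sum>c\<in>{0..<int N}. f c)"
    using N_pos
    by (intro sum_periodic_shift)
       (simp_all add: f_def period_mod unit_root_cong[OF mod_mult_cong[OF mod_diff_left_eq refl]])
  then show ?thesis
    by (simp add: f_def mult_ac add.commute)
qed

lemma period_transform_square: "period_transform k * period_transform k = of_nat (p ^ n)"
proof -
  let ?C = "{0..<int N}"
  have "period_transform k * period_transform k = period_transform k * cnj (period_transform k)"
    by (simp add: period_transform_real)
  also have "\<dots> = (\<Sum>c'\<in>?C. \<Sum>c\<in>?C. period c * period c' * unit_root N ((c - c') * k))"
  proof -
    have "unit_root N ((c - c') * k) = unit_root N (c * k) * unit_root N (- (c' * k))" for c c'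
      unfolding unit_root_add[symmetric] by (simp add: algebra_simps)
    then show ?thesis
      unfolding period_transform_def cnj_sum sum_product
      by (subst sum.swap) (simp add: cnj_period cnj_unit_root mult_ac)
  qed
  also have "\<dots> = (\<Sum>c'\<in>?C. \<Sum>x\<in>?C. period c' * period (c' + x) * unit_root N (x * k))"
    by (rule sum.cong[OF refl sum_period_products_unit_root_shift])
  also have "\<dots> = (\<Sum>x\<in>?C. unit_root N (x * k) * (\<Sum>c'\<in>?C. period c' * period (c' + x)))"
    by (subst sum.swap) (simp add: sum_distrib_left mult_ac)
  also have "\<dots> = (\<Sum>x\<in>?C. if x = 0 then of_nat (p ^ n) else 0)"
  proof (intro sum.cong refl)
    fix x assume "x \<in> ?C"
    then have "int N dvd x \<longleftrightarrow> x = 0"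
      by (auto dest: zdvd_imp_le)
    then show "unit_root N (x * k) * (\<Sum>c'\<in>?C. period c' * period (c' + x))
        = (if x = 0 then of_nat (p ^ n) else 0)"
      by (simp add: period_autocorrelation unit_root_def)
  qed
  also have "\<dots> = of_nat (p ^ n)"
    using N_pos by simp
  finally show ?thesis .
qed

lemma p_power_js_square: "(of_nat (p ^ (j * s)) :: complex) * of_nat (p ^ (j * s)) = of_nat (p ^ n)"
proof -
  have "p ^ (j * s) * p ^ (j * s) = p ^ n"
  proof -
    have exponent: "j * s + j * s = 2 * j * s"
      by (simp add: add_mult_distrib)
    show ?thesis
      unfolding n_eq power_add[symmetric] exponent ..
  qed
  then show ?thesis
    by (metis of_nat_mult)
qed

lemma period_transform_eq_pm:
  "period_transform k = of_nat (p ^ (j * s)) \<or> period_transform k = - of_nat (p ^ (j * s))"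
proof -
  have "period_transform k * period_transform k = of_nat (p ^ (j * s)) * of_nat (p ^ (j * s))"
    by (simp only: period_transform_square p_power_js_square)
  then show ?thesis
    by (simp only: square_eq_iff)
qed

lemma sum_period_transform: "(\<Sum>k\<in>{0..<int N}. period_transform k) = of_nat N * period 0"
proof -
  let ?C = "{0..<int N}"
  have "(\<Sum>k\<in>?C. period_transform k) = (\<Sum>c\<in>?C. period c * (\<Sum>k\<in>?C. unit_root N (c * k)))"
    unfolding period_transform_def by (subst sum.swap) (simp add: sum_distrib_left)
  also have "\<dots> = (\<Sum>c\<in>?C. if c = 0 then period c * of_nat N else 0)"
  proof (intro sum.cong refl)
    fix c assume "c \<in> ?C"
    then have "int N dvd c \<longleftrightarrow> c = 0"
      by (auto dest: zdvd_imp_le)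
    then show "period c * (\<Sum>k\<in>?C. unit_root N (c * k)) = (if c = 0 then period c * of_nat N else 0)"
      using N_ge_2 by (simp add: sum_unit_root)
  qed
  also have "\<dots> = of_nat N * period 0"
    using N_pos by simp
  finally show ?thesis .
qed

lemma period_0_odd_multiple:
  obtains m :: int
  where "odd m" "\<bar>m\<bar> \<le> int N" "of_nat N * period 0 = of_int (m * int p ^ (j * s))"
proof -
  let ?C = "{0..<int N}" and ?Q = "int p ^ (j * s)"
  define \<sigma> where "\<sigma> k = (if period_transform k = of_nat (p ^ (j * s)) then 1 else -1 :: int)" for k
  define m where "m = (\<Sum>k\<in>?C. \<sigma> k)"
  have "period_transform k = of_int (\<sigma> k * ?Q)" for k
    using period_transform_eq_pm[of k] by (auto simp: \<sigma>_def)
  then have "of_nat N * period 0 = (\<Sum>k\<in>?C. of_int (\<sigma> k * ?Q))"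
    by (simp only: sum_period_transform[symmetric])
  also have "\<dots> = of_int (\<Sum>k\<in>?C. \<sigma> k * ?Q)"
    by (rule of_int_sum[symmetric])
  also have "(\<Sum>k\<in>?C. \<sigma> k * ?Q) = m * ?Q"
    by (simp add: m_def sum_distrib_right)
  finally have "of_nat N * period 0 = of_int (m * ?Q)" .
  moreover have "odd m"
  proof -
    have "even (\<Sum>k\<in>?C. \<sigma> k + 1)"
      by (intro dvd_sum) (simp add: \<sigma>_def)
    then show ?thesis
      using odd_N by (simp add: m_def sum.distrib)
  qed
  moreover have "\<bar>m\<bar> \<le> int N"
  proof -
    have "\<bar>m\<bar> \<le> (\<Sum>k\<in>?C. \<bar>\<sigma> k\<bar>)"
      unfolding m_def by (rule sum_abs)
    moreover have "\<bar>\<sigma> k\<bar> = 1" for k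
      by (simp add: \<sigma>_def)
    ultimately show ?thesis
      by simp
  qed
  ultimately show ?thesis
    using that by blast
qed

text \<open>Here the integrality of \<open>(p - 1) \<cdot> period 0\<close> enters, together with \<open>gcd(N, p(p - 1)) = 1\<close>.\<close>

lemma N_dvd_period_0_multiple:
  assumes N_period: "of_nat N * period 0 = of_int (m * int p ^ (j * s))"
  shows "int N dvd m"
proof -
  let ?Q = "int p ^ (j * s)"
  obtain z where z: "of_nat (p - 1) * period 0 = of_int z"
    using period_times_p_minus_1_Ints by (auto elim: Ints_cases)
  have "(of_int (int N * z) :: complex) = of_nat N * (of_nat (p - 1) * period 0)"
    by (simp only: of_int_mult of_int_of_nat_eq z)
  also have "\<dots> = of_nat (p - 1) * (of_nat N * period 0)"
    by (simp add: mult_ac)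
  also have "\<dots> = of_int ((int p - 1) * (m * ?Q))"
    using p_gt_1 by (simp add: N_period)
  finally have "int N * z = (int p - 1) * m * ?Q"
    by (simp only: of_int_eq_iff mult.assoc)
  then have "int N dvd (int p - 1) * m * ?Q"
    by (metis dvd_triv_left)
  moreover have "coprime (int N) ?Q"
    using coprime_N_p by simp
  ultimately show ?thesis
    using coprime_N_p_minus_1 by (simp add: coprime_dvd_mult_left_iff coprime_dvd_mult_right_iff)
qed

lemma period_0_eq_pm: "period 0 = of_nat (p ^ (j * s)) \<or> period 0 = - of_nat (p ^ (j * s))"
proof -
  obtain m where m: "odd m" "\<bar>m\<bar> \<le> int N"
    and N_period: "of_nat N * period 0 = of_int (m * int p ^ (j * s))"
    by (rule period_0_odd_multiple)
  have "m = int N \<or> m = - int N"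
    using N_dvd_period_0_multiple[OF N_period] m by (rule odd_multiple_in_range)
  then have "of_nat N * period 0 = of_nat N * of_nat (p ^ (j * s))
      \<or> of_nat N * period 0 = of_nat N * - of_nat (p ^ (j * s))"
    using N_period by auto
  moreover have "(of_nat N :: complex) \<noteq> 0"
    using N_ge_2 by simp
  ultimately show ?thesis
    by (simp only: mult_left_cancel[OF \<open>of_nat N \<noteq> 0\<close>])
qed

lemma period_eq_0:
  assumes "c \<in> {1..<int N}"
  shows "period c = 0"
proof -
  let ?C = "{0..<int N}"
  have square: "period x * period x = of_real (Re (period x) ^ 2)" for x
    using period_real[of x] by (auto elim!: Reals_cases simp: power2_eq_square)
  have "of_nat (p ^ n) = (\<Sum>x\<in>?C. period x * period x)"
    using period_autocorrelation[of 0] by simp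
  also have "\<dots> = period 0 * period 0 + (\<Sum>x\<in>{1..<int N}. period x * period x)"
    using N_pos by (rule sum_int_first_term)
  moreover have "period 0 * period 0 = of_nat (p ^ n)"
    using period_0_eq_pm p_power_js_square by auto
  ultimately have "(\<Sum>x\<in>{1..<int N}. period x * period x) = 0"
    by simp
  then have "of_real (\<Sum>x\<in>{1..<int N}. Re (period x) ^ 2) = (0 :: complex)"
    unfolding square of_real_sum .
  then have "(\<Sum>x\<in>{1..<int N}. Re (period x) ^ 2) = 0"
    by (simp only: of_real_eq_0_iff)
  then have "Re (period c) ^ 2 = 0"
    using assms by (simp add: sum_nonneg_eq_0_iff)
  then show ?thesis
    using square[of c] by simp
qed

lemma period_eq: "period c = (if int N dvd c then quad_gauss_sum p TYPE('a) else 0)"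
proof -
  have "quad_gauss_sum p TYPE('a) = period 0 + (\<Sum>x\<in>{1..<int N}. period x)"
    using sum_int_first_term[OF N_pos] by (simp flip: sum_period)
  then have "quad_gauss_sum p TYPE('a) = period 0"
    by (simp add: period_eq_0)
  moreover have "period c = 0" if "\<not> int N dvd c"
  proof -
    have "0 \<le> c mod int N" "c mod int N < int N"
      using N_pos by simp_all
    then have "c mod int N \<in> {1..<int N}"
      using that by (auto simp: dvd_eq_mod_eq_0)
    then show ?thesis
      using period_eq_0 period_mod by metis
  qed
  moreover have "period c = period 0" if "int N dvd c"
    using that period_mod[of c] period_mod[of 0] by (simp add: dvd_eq_mod_eq_0)
  ultimately show ?thesis
    by simp
qed

lemma char_sum_difference:
  "2 * char_sum p ((\<lambda>x. w powi c * x) ` (\<Union>t\<in>{1..N-1}. cyclotomic_class w (2*N) (2 * int t)))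
   - char_sum p ((\<lambda>x. w powi c * x) ` (\<Union>t\<in>{1..N-1}. cyclotomic_class w N (int t)))
   = parity_sign c * (quad_gauss_sum p TYPE('a) - period c)"
proof -
  let ?I = "{0..<int L}"
  have "int (2 * N) dvd int L"
    using double_N_dvd_L by simp
  have "N > 0"
    using N_ge_2 by simp
  have "2 * char_sum p ((\<lambda>x. w powi c * x) ` (\<Union>t\<in>{1..N-1}. cyclotomic_class w (2*N) (2 * int t)))
      - char_sum p ((\<lambda>x. w powi c * x) ` (\<Union>t\<in>{1..N-1}. cyclotomic_class w N (int t)))
      = 2 * (\<Sum>l\<in>?I. if even (l - c) \<and> \<not> int N dvd l - c then \<psi> (w powi l) else 0)
        - (\<Sum>l\<in>?I. if \<not> int N dvd l - c then \<psi> (w powi l) else 0)"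
    unfolding translate_cyclotomic_classes[OF \<open>int (2 * N) dvd int L\<close>]
      translate_cyclotomic_classes[OF N_dvd_L] ex_even_nonzero_residue_iff[OF odd_N]
      ex_nonzero_residue_iff[OF \<open>N > 0\<close>] char_sum_w_powi_image ..
  also have "\<dots> = (\<Sum>l\<in>?I. parity_sign c * (if \<not> int N dvd l - c then gauss_term l else 0))"
    unfolding sum_distrib_left sum_subtractf[symmetric]
    by (intro sum.cong refl) (auto simp: gauss_term_def parity_sign_def)
  also have "\<dots> = parity_sign c * (quad_gauss_sum p TYPE('a) - period c)"
    unfolding quad_gauss_sum_eq period_def sum_distrib_left[symmetric] sum_subtractf[symmetric]
    by (intro arg_cong[where f = "\<lambda>x. parity_sign c * x"] sum.cong refl) simp
  finally show ?thesis .
qed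

end

theorem theorem5p2:
  fixes p N q m j s :: nat and w :: "'a::{field,finite}" and c :: int
  assumes "prime p" and "odd p"
    and "odd N" and "N \<ge> 2"
    and "\<exists>e. q = p ^ e" and "m > 0"
    and "CARD('a) = q ^ m" and "q ^ m = p ^ (2 * j * s)"
    and "s \<ge> 2"
    and "j > 0" and "N dvd p ^ j + 1"
    and "\<forall>j'. 0 < j' \<and> j' < j \<longrightarrow> \<not> N dvd p ^ j' + 1"
    and "primitive_elem w"
  shows "(let V = 2 * char_sum p ((\<lambda>x. w powi c * x) ` (\<Union>t\<in>{1..N-1}. cyclotomic_class w (2*N) (2 * int t)))
                - char_sum p ((\<lambda>x. w powi c * x) ` (\<Union>t\<in>{1..N-1}. cyclotomic_class w N (int t)))
         in (if int N dvd c then V = 0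
             else V = quad_gauss_sum p TYPE('a) \<or> V = - quad_gauss_sum p TYPE('a)))"
proof -
  interpret semiprimitive p "2 * j * s" w N j s
    using assms by unfold_locales simp_all
  show ?thesis
    unfolding Let_def char_sum_difference period_eq by (auto simp: parity_sign_def)
qed

end
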